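(* Let $p,q,r$ be distinct sentential variables. In the class of $\Delta$ models (described in the context), each of the following implications holds, where $\varphi\models_\Delta\psi$ means that $[\![\varphi]\!]_M\subseteq[\![\psi]\!]_M$ for every $\Delta$ model $M$: (a) $\mathbb{O}p\wedge(\neg p\succ\neg q)\models_\Delta \mathbb{O}q$; (b) $\mathbb{O}q\wedge(p\succ q)\models_\Delta \mathbb{O}p$; (c) $\mathbb{C}(p,q)\wedge p\models_\Delta \mathbb{O}q$; (d) $\mathbb{C}(p\wedge r,q)\wedge\mathbb{C}(p\wedge\neg r,q)\models_\Delta \mathbb{C}(p,q)$; (e) $\mathbb{C}(p,q)\models_\Delta \mathbb{C}(p\wedge r,q)\vee\mathbb{C}(p\wedge\neg r,q)$; (f) $\mathbb{O}(p\wedge q)\wedge\mathbb{O}(p\wedge\neg q)\models_\Delta \mathbb{O}p$.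
   Context: Fix a set $\mathrm{PROPS}$ of sentential variables (containing $p,q,r$). The language $\mathcal{L}$: every $v\in\mathrm{PROPS}$ is a formula; if $\varphi,\psi$ are formulas so are $\neg\varphi$, $(\varphi\wedge\psi)$, $(\varphi\succeq\psi)$. Abbreviations: $\vee,\rightarrow,\leftrightarrow$ as usual in terms of $\neg,\wedge$; $\varphi\succ\psi := (\varphi\succeq\psi)\wedge\neg(\psi\succeq\varphi)$; $\top := (v_0\rightarrow v_0)$ for a fixed variable $v_0$. Deontic operators: $\mathbb{C}(\varphi,\psi) := (\varphi\wedge\psi)\succ(\varphi\wedge\neg\psi)$ (conditional obligation); $\mathbb{O}\psi := \mathbb{C}(\top,\psi)$ (obligation); $\mathbb{P}\psi:=\neg\mathbb{O}\neg\psi$ (permission). A model is $M=(W,\sigma,u,t)$ with $W$ a nonempty set, $\sigma:W\times\{A\subseteq W:A\ne\emptyset\}\to W$ with $\sigma(w,A)\in A$, $u:W\to\mathbb{R}$, and $t:\mathrm{PROPS}\to\mathcal{P}(W)$. Semantics: $[\![v]\!]_M=t(v)$; $[\![\neg\theta]\!]_M=W\setminus[\![\theta]\!]_M$; $[\![\theta\wedge\psi]\!]_M=[\![\theta]\!]_M\cap[\![\psi]\!]_M$; $[\![\theta\succeq\psi]\!]_M=\emptyset$ if either $[\![\theta]\!]_M$ or $[\![\psi]\!]_M$ is empty, otherwise $\{w: u(\sigma(w,[\![\theta]\!]_M))\ge u(\sigma(w,[\![\psi]\!]_M))\}$. A model is a $\Delta$ model if (i) $W$ is the power set of $\mathrm{PROPS}$;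 (ii) $t(v)=\{w\in W: v\in w\}$ for each $v\in\mathrm{PROPS}$; (iii) $\sigma$ is $\Delta$-based: for all $w_0\in W$ and nonempty $A\subseteq W$ there is no $w_1\in A$ with $w_0\,\triangle\, w_1\subsetneq w_0\,\triangle\,\sigma(w_0,A)$, where $\triangle$ denotes symmetric difference of sets. The utility function $u$ is arbitrary. *)

theory Defs
  imports Main Complex_Main
begin

datatype 'v form = Var 'v | Neg "'v form" | Conj "'v form" "'v form" | Pref "'v form" "'v form"

definition Disj :: "'v form \<Rightarrow> 'v form \<Rightarrow> 'v form" where
  "Disj a b = Neg (Conj (Neg a) (Neg b))"
definition Imp :: "'v form \<Rightarrow> 'v form \<Rightarrow> 'v form" where
  "Imp a b = Neg (Conj a (Neg b))"
definition SPref :: "'v form \<Rightarrow> 'v form \<Rightarrow> 'v form" where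
  "SPref a b = Conj (Pref a b) (Neg (Pref b a))"
definition Top :: "'v \<Rightarrow> 'v form" where
  "Top v0 = Imp (Var v0) (Var v0)"
definition CondOb :: "'v form \<Rightarrow> 'v form \<Rightarrow> 'v form" where
  "CondOb a b = SPref (Conj a b) (Conj a (Neg b))"
definition Ob :: "'v \<Rightarrow> 'v form \<Rightarrow> 'v form" where
  "Ob v0 b = CondOb (Top v0) b"
definition Perm :: "'v \<Rightarrow> 'v form \<Rightarrow> 'v form" where
  "Perm v0 b = Neg (Ob v0 (Neg b))"

fun sem :: "'w set \<Rightarrow> ('w \<Rightarrow> 'w set \<Rightarrow> 'w) \<Rightarrow> ('w \<Rightarrow> real) \<Rightarrow> ('v \<Rightarrow> 'w set) \<Rightarrow> 'v form \<Rightarrow> 'w set" where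
  "sem W \<sigma> u t (Var v) = t v"
| "sem W \<sigma> u t (Neg a) = W - sem W \<sigma> u t a"
| "sem W \<sigma> u t (Conj a b) = sem W \<sigma> u t a \<inter> sem W \<sigma> u t b"
| "sem W \<sigma> u t (Pref a b) =
     (if sem W \<sigma> u t a = {} \<or> sem W \<sigma> u t b = {} then {}
      else {w \<in> W. u (\<sigma> w (sem W \<sigma> u t a)) \<ge> u (\<sigma> w (sem W \<sigma> u t b))})"

definition is_model :: "'w set \<Rightarrow> ('w \<Rightarrow> 'w set \<Rightarrow> 'w) \<Rightarrow> ('w \<Rightarrow> real) \<Rightarrow> ('v \<Rightarrow> 'w set) \<Rightarrow> bool" where
  "is_model W \<sigma> u t \<longleftrightarrow> W \<noteq> {} \<and> (\<forall>v. t v \<subseteq> W) \<and>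
     (\<forall>w\<in>W. \<forall>A. A \<subseteq> W \<and> A \<noteq> {} \<longrightarrow> \<sigma> w A \<in> A \<and> \<sigma> w A \<in> W)"

definition symdiff :: "'a set \<Rightarrow> 'a set \<Rightarrow> 'a set" where
  "symdiff A B = (A - B) \<union> (B - A)"

(* Delta models: worlds are the subsets of PROPS (here: the variable type 'v) *)
definition delta_model :: "'v set set \<Rightarrow> ('v set \<Rightarrow> 'v set set \<Rightarrow> 'v set) \<Rightarrow> ('v set \<Rightarrow> real) \<Rightarrow> ('v \<Rightarrow> 'v set set) \<Rightarrow> bool" where
  "delta_model W \<sigma> u t \<longleftrightarrow> is_model W \<sigma> u t \<and> W = Pow UNIV \<and> (\<forall>v. t v = {w \<in> W. v \<in> w}) \<and>
     (\<forall>w0\<in>W. \<forall>A. A \<subseteq> W \<and> A \<noteq> {} \<longrightarrow>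
        \<not> (\<exists>w1\<in>A. symdiff w0 w1 \<subset> symdiff w0 (\<sigma> w0 A)))"

definition delta_entails :: "'v form \<Rightarrow> 'v form \<Rightarrow> bool" where
  "delta_entails a b \<longleftrightarrow> (\<forall>W \<sigma> u t. delta_model W \<sigma> u t \<longrightarrow> sem W \<sigma> u t a \<subseteq> sem W \<sigma> u t b)"

end

theory Submission
  imports Defs
begin

text \<open>In a \<open>\<Delta>\<close> model every formula built from literals by conjunction denotes a
  subcube \<open>{x. S \<subseteq> x \<and> x \<inter> T = {}}\<close> of the power set, and the world of such a cube
  closest to \<open>w\<close> is obtained by flipping exactly the literals \<open>w\<close> gets wrong: it is
  \<open>w \<union> S - T\<close>. So each preference between cubes at \<open>w\<close> becomes an inequality between the
  utilities of explicit neighbours of \<open>w\<close>, and (a)--(e) follow by a case split on the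
  variables true at \<open>w\<close>. For (f) the antecedents mention the complement of a cube;
  its closest world flips one literal of the cube, which leaves two candidates, and the
  wrong one contradicts the other antecedent.\<close>

definition cube :: "'v set \<Rightarrow> 'v set \<Rightarrow> 'v set set" where
  "cube S T = {x. S \<subseteq> x \<and> x \<inter> T = {}}"

lemma cube_Int: "cube S T \<inter> cube S' T' = cube (S \<union> S') (T \<union> T')"
  by (auto simp: cube_def)

lemma symdiff_inject: "symdiff w x = symdiff w y \<longleftrightarrow> x = y"
  by (auto simp: symdiff_def)

locale delta =
  fixes W :: "'v set set" and \<sigma> :: "'v set \<Rightarrow> 'v set set \<Rightarrow> 'v set"
    and u :: "'v set \<Rightarrow> real" and t :: "'v \<Rightarrow> 'v set set"
  assumes delta_model: "delta_model W \<sigma> u t"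
begin

lemma worlds: "W = UNIV"
  using delta_model by (simp add: delta_model_def)

lemma select_in: "A \<noteq> {} \<Longrightarrow> \<sigma> w A \<in> A"
  using delta_model by (simp add: delta_model_def is_model_def)

lemma select_minimal: "y \<in> A \<Longrightarrow> \<not> symdiff w y \<subset> symdiff w (\<sigma> w A)"
  using delta_model unfolding delta_model_def by blast

lemma select_eqI:
  assumes "y \<in> A" and "symdiff w y \<subseteq> symdiff w (\<sigma> w A)"
  shows "\<sigma> w A = y"
proof -
  have "symdiff w (\<sigma> w A) = symdiff w y"
    using select_minimal[OF assms(1)] assms(2) by blast
  then show ?thesis
    by (simp only: symdiff_inject)
qed

lemma select_self: "w \<in> A \<Longrightarrow> \<sigma> w A = w"
  by (rule select_eqI) (auto simp: symdiff_def)

lemma select_cube: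
  assumes "S \<inter> T = {}"
  shows "\<sigma> w (cube S T) = w \<union> S - T"
proof (rule select_eqI)
  show closest: "w \<union> S - T \<in> cube S T"
    using assms by (auto simp: cube_def)
  have "\<sigma> w (cube S T) \<in> cube S T"
    using closest by (intro select_in) blast
  then show "symdiff w (w \<union> S - T) \<subseteq> symdiff w (\<sigma> w (cube S T))"
    by (auto simp: cube_def symdiff_def)
qed

lemma select_compl_cube:
  assumes "w \<in> cube S T" and "S \<union> T \<noteq> {}"
  obtains s where "s \<in> S" "\<sigma> w (- cube S T) = w - {s}"
        | t' where "t' \<in> T" "\<sigma> w (- cube S T) = insert t' w"
proof -
  define x where "x = \<sigma> w (- cube S T)"
  have "x \<in> - cube S T"
    unfolding x_def using assms(2) by (intro select_in) (auto simp: cube_def)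
  then consider s where "s \<in> S" "s \<notin> x" | t' where "t' \<in> T" "t' \<in> x"
    by (auto simp: cube_def)
  then show thesis
  proof cases
    case (1 s)
    have "w - {s} \<in> - cube S T" "symdiff w (w - {s}) \<subseteq> symdiff w x"
      using 1 assms(1) by (auto simp: cube_def symdiff_def)
    then have "x = w - {s}"
      unfolding x_def by (rule select_eqI)
    with 1 that(1) show thesis by (simp add: x_def)
  next
    case (2 t')
    have "insert t' w \<in> - cube S T" "symdiff w (insert t' w) \<subseteq> symdiff w x"
      using 2 assms(1) by (auto simp: cube_def symdiff_def)
    then have "x = insert t' w"
      unfolding x_def by (rule select_eqI)
    with 2 that(2) show thesis by (simp add: x_def)
  qed
qed

abbreviation den :: "'v form \<Rightarrow> 'v set set" where
  "den \<equiv> sem W \<sigma> u t"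

lemma valuation: "t v = {x. v \<in> x}"
proof -
  have "\<forall>v. t v = {w \<in> W. v \<in> w}"
    using delta_model unfolding delta_model_def by (elim conjE)
  then show ?thesis
    by (simp add: worlds)
qed

lemma den_Var: "den (Var v) = cube {v} {}"
  by (simp add: valuation cube_def)

lemma den_Neg: "den (Neg a) = - den a"
  by (simp add: worlds Compl_eq_Diff_UNIV)

lemma den_Neg_Var: "den (Neg (Var v)) = cube {} {v}"
  by (auto simp: worlds valuation cube_def)

lemma den_Top: "den (Top v0) = cube {} {}"
  by (auto simp: Top_def Imp_def worlds cube_def)

lemma den_Disj: "den (Disj a b) = den a \<union> den b"
  by (auto simp: Disj_def worlds)

lemma den_SPref:
  assumes "den a \<noteq> {}" and "den b \<noteq> {}"
  shows "den (SPref a b) = {w. u (\<sigma> w (den b)) < u (\<sigma> w (den a))}"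
  using assms unfolding SPref_def by (auto simp: worlds)

lemma den_SPref_cube:
  assumes "den a = cube S T" "S \<inter> T = {}" and "den b = cube S' T'" "S' \<inter> T' = {}"
  shows "den (SPref a b) = {w. u (w \<union> S' - T') < u (w \<union> S - T)}"
proof -
  have "S \<in> den a" "S' \<in> den b"
    using assms by (auto simp: cube_def)
  then show ?thesis
    using assms by (subst den_SPref) (auto simp: select_cube)
qed

lemma den_CondOb_Var:
  assumes "den a = cube S T" "S \<inter> T = {}" and "q \<notin> S \<union> T"
  shows "den (CondOb a (Var q)) = {w. u (w \<union> S - insert q T) < u (w \<union> insert q S - T)}"
proof -
  have "den (Conj a (Var q)) = cube (insert q S) T"
       "den (Conj a (Neg (Var q))) = cube S (insert q T)"
    using assms(1) by (simp_all add: den_Var den_Neg_Var cube_Int del: sem.simps(1,2))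
  from den_SPref_cube[OF this(1) _ this(2)] show ?thesis
    using assms(2,3) unfolding CondOb_def by auto
qed

lemma den_Ob_Var: "den (Ob v0 (Var q)) = {w. u (w - {q}) < u (insert q w)}"
  unfolding Ob_def by (simp add: den_Top den_CondOb_Var)

lemma den_Ob_cube:
  assumes "den b = cube S T" "S \<inter> T = {}" and "S \<union> T \<noteq> {}"
  shows "den (Ob v0 b) = {w. u (\<sigma> w (- cube S T)) < u (w \<union> S - T)}"
proof -
  have "S \<in> cube S T" "- cube S T \<noteq> {}"
    using assms(2,3) by (auto simp: cube_def)
  moreover have "den (Conj (Top v0) b) = cube S T" "den (Conj (Top v0) (Neg b)) = - cube S T"
    using assms(1) by (simp_all add: den_Top den_Neg cube_def del: sem.simps(2))
  ultimately show ?thesis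
    using assms(2) unfolding Ob_def CondOb_def by (subst den_SPref) (auto simp: select_cube)
qed

lemma Ob_transfer_worse_violation:
  "den (Conj (Ob v0 (Var p)) (SPref (Neg (Var p)) (Neg (Var q)))) \<subseteq> den (Ob v0 (Var q))"
proof
  have violations: "den (SPref (Neg (Var p)) (Neg (Var q))) = {w. u (w - {q}) < u (w - {p})}"
    using den_SPref_cube[OF den_Neg_Var _ den_Neg_Var] by simp
  fix w assume "w \<in> den (Conj (Ob v0 (Var p)) (SPref (Neg (Var p)) (Neg (Var q))))"
  then have "u (w - {p}) < u (insert p w)" "u (w - {q}) < u (w - {p})"
    by (simp_all add: den_Ob_Var violations)
  then show "w \<in> den (Ob v0 (Var q))"
    by (cases "p \<in> w"; cases "q \<in> w") (auto simp: den_Ob_Var insert_absorb Diff_triv)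
qed

lemma Ob_transfer_better_fulfilment:
  "den (Conj (Ob v0 (Var q)) (SPref (Var p) (Var q))) \<subseteq> den (Ob v0 (Var p))"
proof
  have fulfilments: "den (SPref (Var p) (Var q)) = {w. u (insert q w) < u (insert p w)}"
    using den_SPref_cube[OF den_Var _ den_Var] by simp
  fix w assume "w \<in> den (Conj (Ob v0 (Var q)) (SPref (Var p) (Var q)))"
  then have "u (w - {q}) < u (insert q w)" "u (insert q w) < u (insert p w)"
    by (simp_all add: den_Ob_Var fulfilments)
  then show "w \<in> den (Ob v0 (Var p))"
    by (cases "p \<in> w"; cases "q \<in> w") (auto simp: den_Ob_Var insert_absorb Diff_triv)
qed

lemma factual_detachment:
  assumes "p \<noteq> q"
  shows "den (Conj (CondOb (Var p) (Var q)) (Var p)) \<subseteq> den (Ob v0 (Var q))"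
proof
  have conditional: "den (CondOb (Var p) (Var q)) = {w. u (w \<union> {p} - {q}) < u (w \<union> {q, p})}"
    using den_CondOb_Var[OF den_Var[of p], of q] assms by simp
  fix w assume "w \<in> den (Conj (CondOb (Var p) (Var q)) (Var p))"
  then have "p \<in> w" "u (w \<union> {p} - {q}) < u (w \<union> {q, p})"
    by (simp_all add: conditional valuation)
  then show "w \<in> den (Ob v0 (Var q))"
    by (simp add: den_Ob_Var insert_absorb)
qed

text \<open>Refining the antecedent by the literal of \<open>r\<close> that already holds at \<open>w\<close> does not
  move either closest world.\<close>

lemma CondOb_refined_by_current_literal:
  assumes "p \<noteq> q" "p \<noteq> r" "q \<noteq> r"
  shows "w \<in> den (CondOb (Var p) (Var q)) \<longleftrightarrow>
    (if r \<in> w then w \<in> den (CondOb (Conj (Var p) (Var r)) (Var q))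
     else w \<in> den (CondOb (Conj (Var p) (Neg (Var r))) (Var q)))"
proof -
  have "den (Conj (Var p) (Var r)) = cube {p, r} {}"
       "den (Conj (Var p) (Neg (Var r))) = cube {p} {r}"
    by (auto simp: den_Var den_Neg_Var cube_def simp del: sem.simps(1,2))
  from this[THEN den_CondOb_Var, of q] den_CondOb_Var[OF den_Var[of p], of q] assms
  have refined: "den (CondOb (Conj (Var p) (Var r)) (Var q)) =
                   {w. u (insert p (insert r w) - {q}) < u (insert p (insert q (insert r w)))}"
    and refined_neg: "den (CondOb (Conj (Var p) (Neg (Var r))) (Var q)) =
                   {w. u (insert p w - {q, r}) < u (insert p (insert q w) - {r})}"
    and unrefined: "den (CondOb (Var p) (Var q)) =
                   {w. u (insert p w - {q}) < u (insert p (insert q w))}"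
    by (simp_all add: insert_commute)
  show ?thesis
  proof (cases "r \<in> w")
    case True
    then show ?thesis
      by (simp add: refined unrefined insert_absorb)
  next
    case False
    then have "insert p w - {q, r} = insert p w - {q}" "insert p (insert q w) - {r} = insert p (insert q w)"
      using assms by auto
    with False show ?thesis
      by (simp add: refined_neg unrefined)
  qed
qed

lemma CondOb_by_cases:
  assumes "p \<noteq> q" "p \<noteq> r" "q \<noteq> r"
  shows "den (Conj (CondOb (Conj (Var p) (Var r)) (Var q)) (CondOb (Conj (Var p) (Neg (Var r))) (Var q)))
    \<subseteq> den (CondOb (Var p) (Var q))"
proof
  fix w assume "w \<in> den (Conj (CondOb (Conj (Var p) (Var r)) (Var q)) (CondOb (Conj (Var p) (Neg (Var r))) (Var q)))"
  then show "w \<in> den (CondOb (Var p) (Var q))"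
    using CondOb_refined_by_current_literal[OF assms, of w] by (simp split: if_splits)
qed

lemma CondOb_split_by_cases:
  assumes "p \<noteq> q" "p \<noteq> r" "q \<noteq> r"
  shows "den (CondOb (Var p) (Var q))
    \<subseteq> den (Disj (CondOb (Conj (Var p) (Var r)) (Var q)) (CondOb (Conj (Var p) (Neg (Var r))) (Var q)))"
proof
  fix w assume "w \<in> den (CondOb (Var p) (Var q))"
  then show "w \<in> den (Disj (CondOb (Conj (Var p) (Var r)) (Var q)) (CondOb (Conj (Var p) (Neg (Var r))) (Var q)))"
    using CondOb_refined_by_current_literal[OF assms, of w] by (simp add: den_Disj split: if_splits)
qed

lemma Ob_by_cases_at:
  assumes "p \<noteq> q"
    and both: "u (\<sigma> w (- cube {p, q} {})) < u (insert p (insert q w))"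
    and only_p: "u (\<sigma> w (- cube {p} {q})) < u (insert p w - {q})"
  shows "u (w - {p}) < u (insert p w)"
proof (cases "p \<in> w")
  case False
  then have "\<sigma> w (- cube {p, q} {}) = w" "\<sigma> w (- cube {p} {q}) = w"
    by (simp_all add: select_self cube_def)
  with both only_p False assms show ?thesis
    by (cases "q \<in> w") (auto simp: insert_absorb Diff_triv)
next
  case p: True
  show ?thesis
  proof (cases "q \<in> w")
    case True
    with p have fulfils: "w \<in> cube {p, q} {}" and stay: "\<sigma> w (- cube {p} {q}) = w"
      by (simp_all add: select_self cube_def)
    obtain s where s: "s = p \<or> s = q" and flip: "\<sigma> w (- cube {p, q} {}) = w - {s}"
      by (rule select_compl_cube[OF fulfils]) auto
    have "u (w - {s}) < u w" "u w < u (w - {q})"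
      using both only_p p True unfolding flip stay by (simp_all add: insert_absorb)
    with s have "u (w - {p}) < u w"
      by auto
    with p show ?thesis
      by (simp add: insert_absorb)
  next
    case False
    with p have fulfils: "w \<in> cube {p} {q}" and stay: "\<sigma> w (- cube {p, q} {}) = w"
      by (simp_all add: select_self cube_def)
    obtain x where x: "x = w - {p} \<or> x = insert q w" and flip: "\<sigma> w (- cube {p} {q}) = x"
      by (rule select_compl_cube[OF fulfils]) auto
    have "u w < u (insert q w)" "u x < u w"
      using both only_p p False unfolding flip stay by (simp_all add: insert_absorb Diff_triv)
    with x have "u (w - {p}) < u w"
      by auto
    with p show ?thesis
      by (simp add: insert_absorb)
  qed
qed

lemma Ob_by_cases:
  assumes "p \<noteq> q"
  shows "den (Conj (Ob v0 (Conj (Var p) (Var q))) (Ob v0 (Conj (Var p) (Neg (Var q)))))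
    \<subseteq> den (Ob v0 (Var p))"
proof
  have "den (Conj (Var p) (Var q)) = cube {p, q} {}"
       "den (Conj (Var p) (Neg (Var q))) = cube {p} {q}"
    by (auto simp: den_Var den_Neg_Var cube_def simp del: sem.simps(1,2))
  from this[THEN den_Ob_cube] assms
  have ob_both: "den (Ob v0 (Conj (Var p) (Var q))) =
                   {w. u (\<sigma> w (- cube {p, q} {})) < u (insert p (insert q w))}"
    and ob_only_p: "den (Ob v0 (Conj (Var p) (Neg (Var q)))) =
                   {w. u (\<sigma> w (- cube {p} {q})) < u (insert p w - {q})}"
    by auto
  fix w assume "w \<in> den (Conj (Ob v0 (Conj (Var p) (Var q))) (Ob v0 (Conj (Var p) (Neg (Var q)))))"
  then have "u (w - {p}) < u (insert p w)"
    by (intro Ob_by_cases_at[OF assms]) (simp_all add: ob_both ob_only_p)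
  then show "w \<in> den (Ob v0 (Var p))"
    by (simp add: den_Ob_Var)
qed

end

lemma delta_entailsI:
  "(\<And>W \<sigma> u t. delta W \<sigma> u t \<Longrightarrow> sem W \<sigma> u t a \<subseteq> sem W \<sigma> u t b) \<Longrightarrow> delta_entails a b"
  by (simp add: delta_entails_def delta.intro)

theorem proposition4p2:
  fixes p q r v0 :: 'v
  assumes "p \<noteq> q" and "p \<noteq> r" and "q \<noteq> r"
  shows "delta_entails (Conj (Ob v0 (Var p)) (SPref (Neg (Var p)) (Neg (Var q)))) (Ob v0 (Var q)) \<and>
         delta_entails (Conj (Ob v0 (Var q)) (SPref (Var p) (Var q))) (Ob v0 (Var p)) \<and>
         delta_entails (Conj (CondOb (Var p) (Var q)) (Var p)) (Ob v0 (Var q)) \<and>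
         delta_entails (Conj (CondOb (Conj (Var p) (Var r)) (Var q)) (CondOb (Conj (Var p) (Neg (Var r))) (Var q)))
           (CondOb (Var p) (Var q)) \<and>
         delta_entails (CondOb (Var p) (Var q))
           (Disj (CondOb (Conj (Var p) (Var r)) (Var q)) (CondOb (Conj (Var p) (Neg (Var r))) (Var q))) \<and>
         delta_entails (Conj (Ob v0 (Conj (Var p) (Var q))) (Ob v0 (Conj (Var p) (Neg (Var q))))) (Ob v0 (Var p))"
  by (intro conjI delta_entailsI)
    (simp_all only: delta.Ob_transfer_worse_violation delta.Ob_transfer_better_fulfilment
      delta.factual_detachment[OF _ assms(1)] delta.CondOb_by_cases[OF _ assms]
      delta.CondOb_split_by_cases[OF _ assms] delta.Ob_by_cases[OF _ assms(1)])

end
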